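(* Let $F:\mathbb{R}\to[0,1]$ be a distribution function with Lebesgue–Stieltjes measure $\mu_F$, let $0<\lambda\le1$ and $\alpha\in(0,1)$, and put $\xi=F^{\wedge}(\alpha)$, $\eta=F^{\vee}(\alpha)$. Then $A^{+}_{\lambda,\alpha}=\{x\in\mathbb{R}:x>\xi,\ F_\lambda(x)\le\alpha\}$ is a Borel set and $\mu_F(A^{+}_{\lambda,\alpha})=0$. In particular, if $\xi<\eta$, then $\mu_F(\{x\in\mathbb{R}:F(x)=\alpha\})=\Delta F(\xi)=\alpha-F(\xi-)$.
   Context: A distribution function is a non-decreasing, right-continuous $F:\mathbb{R}\to[0,1]$ with limits $0$ at $-\infty$ and $1$ at $+\infty$. $\mu_F$ is the unique Borel measure on $\mathbb{R}$ with $\mu_F((x,y])=F(y)-F(x)$. $F(x-)=\lim_{z\uparrow x}F(z)$, $\Delta F(x)=F(x)-F(x-)$, $F_\lambda(x)=F(x-)+\lambda\Delta F(x)$. $F^{\wedge}(\alpha)=\inf\{x:F(x)\ge\alpha\}$, $F^{\vee}(\alpha)=\inf\{x:F(x)>\alpha\}$. *)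

theory Defs
  imports "HOL-Analysis.Analysis"
begin

definition distribution_function :: "(real \<Rightarrow> real) \<Rightarrow> bool" where
  "distribution_function F \<longleftrightarrow>
     mono F \<and> (\<forall>x. 0 \<le> F x \<and> F x \<le> 1) \<and>
     (\<forall>x. continuous (at_right x) F) \<and>
     (F \<longlongrightarrow> 0) at_bot \<and> (F \<longlongrightarrow> 1) at_top"

definition left_lim :: "(real \<Rightarrow> real) \<Rightarrow> real \<Rightarrow> real" where
  "left_lim F x = Lim (at_left x) F"

definition jump :: "(real \<Rightarrow> real) \<Rightarrow> real \<Rightarrow> real" where
  "jump F x = F x - left_lim F x"

definition F_lam :: "(real \<Rightarrow> real) \<Rightarrow> real \<Rightarrow> real \<Rightarrow> real" where
  "F_lam F l x = left_lim F x + l * jump F x"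

definition lower_quantile :: "(real \<Rightarrow> real) \<Rightarrow> real \<Rightarrow> real" where
  "lower_quantile F \<alpha> = Inf {x. F x \<ge> \<alpha>}"

definition upper_quantile :: "(real \<Rightarrow> real) \<Rightarrow> real \<Rightarrow> real" where
  "upper_quantile F \<alpha> = Inf {x. F x > \<alpha>}"

end

theory Submission
  imports Defs "HOL-Probability.Probability"
begin

text \<open>
  Since \<open>F(\<xi>) \<ge> \<alpha>\<close> and
  \<open>F(x-) \<ge> F(\<xi>)\<close> for \<open>x > \<xi>\<close>, the condition \<open>F\<^sub>\<lambda>(x) \<le> \<alpha>\<close> with \<open>\<lambda> > 0\<close> forces
  \<open>\<Delta>F(x) = 0\<close> and \<open>F(x) = \<alpha>\<close>. So \<open>A\<close> is a set to the right of \<open>\<xi>\<close> on which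
  \<open>F\<close> is constant and equal to \<open>F(\<xi>)\<close>; it is an interval \<open>(\<xi>,s]\<close>, \<open>(\<xi>,s)\<close> or
  \<open>(\<xi>,\<infinity>)\<close> whose mass is a difference of (left) values of \<open>F\<close>, hence zero.
  If \<open>\<xi> < \<eta>\<close> then \<open>F(\<xi>) = \<alpha>\<close>, and the level set \<open>{F = \<alpha>}\<close> is \<open>{\<xi>}\<close> together with
  this null set, so its mass is the atom \<open>\<Delta>F(\<xi>)\<close>.
\<close>

lemma distribution_function_real_distribution:
  assumes "distribution_function F"
  shows "real_distribution (interval_measure F)" and "cdf (interval_measure F) = F"
proof -
  have mono: "\<And>x y. x \<le> y \<Longrightarrow> F x \<le> F y"
    using assms by (auto simp: distribution_function_def mono_def)
  note df = assms[unfolded distribution_function_def]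
  show "real_distribution (interval_measure F)"
    using df by (intro real_distribution_interval_measure mono) auto
  show "cdf (interval_measure F) = F"
    using df by (intro cdf_interval_measure mono) auto
qed

lemma right_down_closed_real_set_cases:
  fixes L :: "real set"
  assumes "L \<subseteq> {a<..}" and down_closed: "\<And>x y. x \<in> L \<Longrightarrow> a < y \<Longrightarrow> y \<le> x \<Longrightarrow> y \<in> L"
  obtains "L = {}"
  | (Ioc) s where "a < s" and "L = {a<..s}"
  | (Ioo) s where "a < s" and "L = {a<..<s}"
  | (Ioi) "L = {a<..}"
proof (cases "L = {}")
  case False
  show ?thesis
  proof (cases "bdd_above L")
    case unbounded: False
    have "L = {a<..}"
    proof (intro antisym subsetI)
      fix y
      assume "y \<in> {a<..}"
      moreover obtain x where "x \<in> L" "y < x"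
        using unbounded unfolding bdd_above_def by (auto simp: not_le)
      ultimately show "y \<in> L"
        using down_closed[of x y] by simp
    qed (use assms(1) in blast)
    then show ?thesis
      by (rule that(4))
  next
    case True
    define s where "s = Sup L"
    have le_s: "x \<le> s" if "x \<in> L" for x
      unfolding s_def using that True by (rule cSup_upper)
    obtain x where "x \<in> L"
      using False by blast
    with assms(1) le_s[of x] have "a < s"
      by auto
    have "{a<..<s} \<subseteq> L"
    proof
      fix y
      assume y: "y \<in> {a<..<s}"
      then obtain z where "z \<in> L" "y < z"
        using False True less_cSup_iff[of L y] unfolding s_def by auto
      then show "y \<in> L"
        using down_closed[of z y] y by simp
    qed
    moreover have "L \<subseteq> {a<..s}"
      using assms(1) le_s by auto
    ultimately have "L = {a<..<s} \<or> L = {a<..s}"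
      by (cases "s \<in> L") (auto simp: le_less)
    then show ?thesis
      using that(2,3) \<open>a < s\<close> by blast
  qed
qed (rule that(1))

context real_distribution
begin

lemma left_lim_cdf: "left_lim (cdf M) x = measure M {..<x}"
  unfolding left_lim_def using cdf_at_left by (intro tendsto_Lim) auto

lemma jump_cdf: "jump (cdf M) x = measure M {x}"
proof -
  have "measure M {x} = measure M ({..x} - {..<x})"
    by (intro arg_cong[where f="measure M"]) auto
  also have "\<dots> = measure M {..x} - measure M {..<x}"
    by (intro finite_measure_Diff) auto
  finally show ?thesis
    by (simp add: jump_def left_lim_cdf cdf_def2)
qed

lemma cdf_le_left_lim: "y < x \<Longrightarrow> cdf M y \<le> left_lim (cdf M) x"
  unfolding left_lim_cdf cdf_def2 by (intro finite_measure_mono) auto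

lemma left_lim_le_cdf: "left_lim (cdf M) x \<le> cdf M x"
  unfolding left_lim_cdf cdf_def2 by (intro finite_measure_mono) auto

lemma F_lam_cdf_le_iff:
  assumes "0 < lam" and "\<alpha> \<le> left_lim (cdf M) x"
  shows "F_lam (cdf M) lam x \<le> \<alpha> \<longleftrightarrow> cdf M x = \<alpha>"
proof -
  define L J where "L = left_lim (cdf M) x" and "J = jump (cdf M) x"
  have J: "0 \<le> J" and LJ: "cdf M x = L + J"
    using left_lim_le_cdf[of x] by (simp_all add: L_def J_def jump_def)
  have "L + lam * J \<le> \<alpha> \<longleftrightarrow> L + J = \<alpha>"
  proof
    assume "L + lam * J \<le> \<alpha>"
    then have "lam * J \<le> 0" using assms(2) by (simp add: L_def)
    then have "J = 0" using J assms(1) by (simp add: mult_le_0_iff)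
    then show "L + J = \<alpha>" using \<open>L + lam * J \<le> \<alpha>\<close> assms(2) by (simp add: L_def)
  next
    assume "L + J = \<alpha>"
    moreover from this have "J = 0" using J assms(2) by (simp add: L_def)
    ultimately show "L + lam * J \<le> \<alpha>" by simp
  qed
  then show ?thesis by (simp add: F_lam_def LJ L_def J_def)
qed

lemma bdd_below_cdf_superlevel:
  assumes "0 < \<alpha>"
  shows "bdd_below {x. \<alpha> \<le> cdf M x}"
proof -
  obtain b where b: "\<And>x. x \<le> b \<Longrightarrow> cdf M x < \<alpha>"
    using order_tendstoD(2)[OF cdf_lim_at_bot assms] by (auto simp: eventually_at_bot_linorder)
  have "b \<le> x" if "\<alpha> \<le> cdf M x" for x
    using b[of x] that by force
  then show ?thesis unfolding bdd_below_def by blast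
qed

lemma cdf_less_lower_quantile:
  assumes "0 < \<alpha>" and "x < lower_quantile (cdf M) \<alpha>"
  shows "cdf M x < \<alpha>"
proof (rule ccontr)
  assume "\<not> cdf M x < \<alpha>"
  then have "lower_quantile (cdf M) \<alpha> \<le> x"
    unfolding lower_quantile_def using bdd_below_cdf_superlevel[OF assms(1)]
    by (intro cInf_lower) auto
  with assms(2) show False by simp
qed

lemma cdf_lower_quantile_ge:
  assumes "0 < \<alpha>" and "\<alpha> < 1"
  shows "\<alpha> \<le> cdf M (lower_quantile (cdf M) \<alpha>)"
proof -
  define S where "S = {x. \<alpha> \<le> cdf M x}"
  define \<xi> where "\<xi> = lower_quantile (cdf M) \<alpha>"
  have "S \<noteq> {}"
    using order_tendstoD(1)[OF cdf_lim_at_top_prob assms(2)]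
    by (auto simp: S_def eventually_at_top_linorder intro: less_imp_le)
  have "\<alpha> \<le> cdf M y" if "\<xi> < y" for y
  proof -
    obtain z where "z \<in> S" "z < y"
      using \<open>\<xi> < y\<close> \<open>S \<noteq> {}\<close> bdd_below_cdf_superlevel[OF assms(1)]
      unfolding \<xi>_def lower_quantile_def S_def by (meson cInf_less_iff)
    then show ?thesis
      using cdf_nondecreasing[of z y] by (simp add: S_def)
  qed
  then have "\<forall>\<^sub>F y in at_right \<xi>. \<alpha> \<le> cdf M y"
    by (simp add: eventually_at_right_less eventually_at_filter)
  moreover have "(cdf M \<longlongrightarrow> cdf M \<xi>) (at_right \<xi>)"
    using cdf_is_right_cont by (simp add: continuous_within)
  ultimately show ?thesis
    unfolding \<xi>_def by (intro tendsto_lowerbound) auto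
qed

lemma cdf_lower_quantile_eq_if_less_upper:
  assumes "0 < \<alpha>" and "\<alpha> < 1"
    and "lower_quantile (cdf M) \<alpha> < upper_quantile (cdf M) \<alpha>"
  shows "cdf M (lower_quantile (cdf M) \<alpha>) = \<alpha>"
proof (rule antisym[OF ccontr cdf_lower_quantile_ge[OF assms(1,2)]])
  assume "\<not> cdf M (lower_quantile (cdf M) \<alpha>) \<le> \<alpha>"
  moreover have "bdd_below {x. \<alpha> < cdf M x}"
    by (rule bdd_below_mono[OF bdd_below_cdf_superlevel[OF assms(1)]]) auto
  ultimately have "upper_quantile (cdf M) \<alpha> \<le> lower_quantile (cdf M) \<alpha>"
    unfolding upper_quantile_def[of _ \<alpha>] by (intro cInf_lower) auto
  with assms(3) show False by simp
qed

lemma measure_Ioo_cdf_const: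
  assumes "a < b" and "\<And>x. a < x \<Longrightarrow> x < b \<Longrightarrow> cdf M x = cdf M a"
  shows "measure M {a<..<b} = 0"
proof -
  have "\<forall>\<^sub>F x in at_left b. cdf M x = cdf M a"
    using eventually_at_left_real[OF assms(1)] by eventually_elim (simp add: assms(2))
  then have "(cdf M \<longlongrightarrow> cdf M a) (at_left b)"
    by (rule tendsto_eventually)
  then have left: "measure M {..<b} = cdf M a"
    using cdf_at_left tendsto_unique[OF trivial_limit_at_left_real] by blast
  have "measure M {a<..<b} = measure M ({..<b} - {..a})"
    by (intro arg_cong[where f="measure M"]) auto
  also have "\<dots> = measure M {..<b} - measure M {..a}"
    using assms(1) by (intro finite_measure_Diff) auto
  finally show ?thesis
    by (simp add: left cdf_def2)
qed

lemma measure_Ioi_cdf_const: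
  assumes "\<And>x. a < x \<Longrightarrow> cdf M x = cdf M a"
  shows "measure M {a<..} = 0"
proof -
  have "\<forall>\<^sub>F x in at_top. cdf M x = cdf M a"
    using eventually_gt_at_top[of a] by eventually_elim (rule assms)
  then have "(cdf M \<longlongrightarrow> cdf M a) at_top"
    by (rule tendsto_eventually)
  then have "cdf M a = 1"
    using cdf_lim_at_top_prob tendsto_unique[OF trivial_limit_at_top_linorder] by blast
  moreover have "{a<..} = space M - {..a}"
    by auto
  ultimately show ?thesis
    using prob_compl[of "{..a}"] by (simp add: cdf_def2)
qed

lemma emeasure_cdf_level_right_null:
  "emeasure M {x. a < x \<and> cdf M x = cdf M a} = 0" (is "emeasure M ?L = 0")
proof -
  have const: "cdf M x = cdf M a" if "x \<in> ?L" for x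
    using that by simp
  have sub: "?L \<subseteq> {a<..}"
    by auto
  have down_closed: "y \<in> ?L" if "x \<in> ?L" "a < y" "y \<le> x" for x y
    using that cdf_nondecreasing[of a y] cdf_nondecreasing[of y x] by auto
  have "measure M ?L = 0"
  proof (rule right_down_closed_real_set_cases[OF sub down_closed])
    show "?L = {} \<Longrightarrow> measure M ?L = 0"
      by (simp only: measure_empty)
  next
    fix s
    assume "a < s" and L: "?L = {a<..s}"
    then show "measure M ?L = 0"
      using cdf_diff_eq[of a s] const[unfolded L, of s] by simp
  next
    fix s
    assume "a < s" and L: "?L = {a<..<s}"
    then show "measure M ?L = 0"
      using const[unfolded L] by (simp add: measure_Ioo_cdf_const)
  next
    assume L: "?L = {a<..}"
    then show "measure M ?L = 0"
      using const[unfolded L] by (simp add: measure_Ioi_cdf_const)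
  qed
  then show ?thesis
    by (simp add: emeasure_eq_measure)
qed

lemma F_lam_le_right_of_lower_quantile_iff:
  assumes "0 < lam" and "0 < \<alpha>" and "\<alpha> < 1" and "lower_quantile (cdf M) \<alpha> < x"
  shows "F_lam (cdf M) lam x \<le> \<alpha> \<longleftrightarrow> cdf M x = \<alpha>"
  using F_lam_cdf_le_iff[OF assms(1)] cdf_le_left_lim[OF assms(4)]
    cdf_lower_quantile_ge[OF assms(2,3)] by simp

lemma emeasure_level_right_of_lower_quantile_null:
  assumes "0 < \<alpha>" and "\<alpha> < 1"
  shows "emeasure M {x. lower_quantile (cdf M) \<alpha> < x \<and> cdf M x = \<alpha>} = 0"
    (is "emeasure M {x. ?\<xi> < x \<and> cdf M x = \<alpha>} = 0")
proof (cases "\<exists>x. ?\<xi> < x \<and> cdf M x = \<alpha>")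
  case True
  then obtain x where "?\<xi> < x" "cdf M x = \<alpha>"
    by blast
  then have "cdf M ?\<xi> = \<alpha>"
    using cdf_lower_quantile_ge[OF assms] cdf_nondecreasing[of ?\<xi> x] by simp
  then show ?thesis
    using emeasure_cdf_level_right_null[of ?\<xi>] by simp
next
  case False
  then have "{x. ?\<xi> < x \<and> cdf M x = \<alpha>} = {}"
    by blast
  then show ?thesis
    by (simp only: emeasure_empty)
qed

lemma level_set_eq_if_lower_less_upper_quantile:
  assumes "0 < \<alpha>" and "\<alpha> < 1"
    and "lower_quantile (cdf M) \<alpha> < upper_quantile (cdf M) \<alpha>"
  shows "{x. cdf M x = \<alpha>} =
    insert (lower_quantile (cdf M) \<alpha>) {x. lower_quantile (cdf M) \<alpha> < x \<and> cdf M x = \<alpha>}"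
  using cdf_lower_quantile_eq_if_less_upper[OF assms]
    cdf_less_lower_quantile[OF assms(1)] less_irrefl linorder_neqE
  by blast

end

theorem mainTheorem5:
  fixes F :: "real \<Rightarrow> real" and lam \<alpha> :: real
  assumes "distribution_function F"
    and "0 < lam" and "lam \<le> 1"
    and "0 < \<alpha>" and "\<alpha> < 1"
  defines "\<xi> \<equiv> lower_quantile F \<alpha>"
    and "\<eta> \<equiv> upper_quantile F \<alpha>"
  defines "A \<equiv> {x. x > \<xi> \<and> F_lam F lam x \<le> \<alpha>}"
  shows "A \<in> sets borel \<and> emeasure (interval_measure F) A = 0
    \<and> (\<xi> < \<eta> \<longrightarrow>
         emeasure (interval_measure F) {x. F x = \<alpha>} = ennreal (jump F \<xi>)
       \<and> jump F \<xi> = \<alpha> - left_lim F \<xi>)"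
proof -
  define M where "M = interval_measure F"
  interpret real_distribution M
    unfolding M_def using assms(1) by (rule distribution_function_real_distribution)
  have cdf_M: "cdf M = F"
    unfolding M_def using assms(1) by (rule distribution_function_real_distribution)
  have A_eq: "A = {x. \<xi> < x \<and> F x = \<alpha>}"
    using F_lam_le_right_of_lower_quantile_iff[OF assms(2,4,5)]
    by (auto simp: A_def cdf_M \<xi>_def)
  have "F \<in> borel_measurable borel"
    using assms(1) by (intro borel_measurable_mono) (simp add: distribution_function_def)
  then have A_borel: "A \<in> sets borel"
    unfolding A_eq by measurable
  have A_null: "emeasure M A = 0"
    using emeasure_level_right_of_lower_quantile_null[OF assms(4,5)] by (simp add: A_eq cdf_M \<xi>_def)
  have "emeasure M {x. F x = \<alpha>} = ennreal (jump F \<xi>) \<and> jump F \<xi> = \<alpha> - left_lim F \<xi>"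
    if "\<xi> < \<eta>"
  proof -
    have "F \<xi> = \<alpha>"
      using cdf_lower_quantile_eq_if_less_upper[OF assms(4,5)] that by (simp add: cdf_M \<xi>_def \<eta>_def)
    have level_set: "{x. F x = \<alpha>} = insert \<xi> A"
      using level_set_eq_if_lower_less_upper_quantile[OF assms(4,5)] that
      by (simp add: A_eq cdf_M \<xi>_def \<eta>_def)
    have "emeasure M {x. F x = \<alpha>} = emeasure M {\<xi>} + emeasure M A"
      unfolding level_set using A_borel by (intro emeasure_insert) (auto simp: A_eq)
    also have "\<dots> = ennreal (jump F \<xi>)"
      using A_null jump_cdf[of \<xi>] by (simp add: cdf_M emeasure_eq_measure)
    finally show ?thesis
      using \<open>F \<xi> = \<alpha>\<close> by (simp add: jump_def)
  qed
  then show ?thesis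
    using A_borel A_null unfolding M_def by blast
qed

end
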